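(* Let $d\ge1$, $b\ge2$, $0\le t\le m$, $n=b^m$, $\Theta\subset\mathbb{R}$, and measurable $g_\theta:(0,1)^d\to\mathbb{R}$ for $\theta\in\Theta$. Assume that for every $\theta\in\Theta$, $g_\theta(\boldsymbol u)$ is a continuous random variable whenever $d-1$ components of $\boldsymbol u$ are fixed and the remaining component is uniformly distributed over an open interval in $(0,1)$. Fix $\theta\in\Theta$, let $\{\tilde{\boldsymbol u}_1,\dots,\tilde{\boldsymbol u}_n\}$ be a scrambled $(t,m,d)$-net in base $b$, and let $L_i=g_\theta(\tilde{\boldsymbol u}_i)$. Then with probability one, for every $y\in\mathbb{R}$, at most $b^t$ of the observations $L_1,\dots,L_n$ are equal to $y$.
   Context: A $(t,m,d)$-net in base $b$ is a finite sequence of $b^m$ points in $[0,1)^d$ such that every box $\prod_{j=1}^d[t_jb^{-k_j},(t_j+1)b^{-k_j})$ (nonnegative integers $k_j$, $0\le t_j<b^{k_j}$) of volume $b^{t-m}$ contains exactly $b^t$ of the points. The scrambled net $\tilde{\boldsymbol u}_1,\dots,\tilde{\boldsymbol u}_n$ is obtained from a $(t,m,d)$-net $\boldsymbol u_1,\dots,\boldsymbol u_n$ by Owen's nested uniform scrambling: writing $u_i^j=\sum_{k\ge1}a_{ijk}b^{-k}$, set $\tilde u_i^j=\sum_{k\ge1}\tilde a_{ijk}b^{-k}$ with $\tilde a_{ij1}=\pi_j(a_{ij1})$ and $\tilde a_{ijk}=\pi_{ja_{ij1}\cdots a_{ij,k-1}}(a_{ijk})$, where the permutations $\pi_\bullet$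 are mutually independent and each uniformly distributed over the $b!$ permutations of $\{0,\dots,b-1\}$. *)

theory Defs
  imports "HOL-Probability.Probability"
begin

definition open_unit_cube :: "(real ^ 'd) set" where
  "open_unit_cube = {x. \<forall>j. 0 < x $ j \<and> x $ j < 1}"

definition coord_upd :: "real ^ 'd \<Rightarrow> 'd \<Rightarrow> real \<Rightarrow> real ^ 'd" where
  "coord_upd v j x = (\<chi> k. if k = j then x else v $ k)"

text \<open>The k-th base-b digit (k \<ge> 1) of x in [0,1): x = sum_{k\<ge>1} digit b x k * b^(-k),
  using the standard expansion (not ending in infinitely many digits b-1).\<close>
definition digit :: "nat \<Rightarrow> real \<Rightarrow> nat \<Rightarrow> nat" where
  "digit b x k = nat \<lfloor>x * real b ^ k\<rfloor> mod b"

text \<open>(t,m,d)-net in base b: the points u 0, ..., u (b^m - 1) lie in [0,1)^d and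
  every elementary b-adic box of volume b^(t-m) contains exactly b^t of them.\<close>
definition tmd_net :: "nat \<Rightarrow> nat \<Rightarrow> nat \<Rightarrow> (nat \<Rightarrow> real ^ 'd) \<Rightarrow> bool" where
  "tmd_net b t m u \<longleftrightarrow>
     (\<forall>i < b ^ m. \<forall>j. 0 \<le> u i $ j \<and> u i $ j < 1) \<and>
     (\<forall>(k :: 'd \<Rightarrow> nat) (c :: 'd \<Rightarrow> nat).
        real b ^ t / real b ^ m = 1 / real b ^ (\<Sum>j\<in>UNIV. k j) \<and> (\<forall>j. c j < b ^ k j) \<longrightarrow>
        card {i. i < b ^ m \<and>
                 (\<forall>j. real (c j) / real b ^ k j \<le> u i $ j \<and>
                      u i $ j < real (c j + 1) / real b ^ k j)} = b ^ t)"

text \<open>Owen's nested uniform scrambling of coordinate j of a value x, given the family of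
  permutations perm indexed by (j, [a_1, ..., a_(k-1)]): the k-th scrambled digit is
  pi_(j a_1 ... a_(k-1)) (a_k); for k = 1 the index is (j, []), i.e. pi_j.\<close>
definition scramble_coord ::
    "nat \<Rightarrow> ('d \<times> nat list \<Rightarrow> nat \<Rightarrow> nat) \<Rightarrow> 'd \<Rightarrow> real \<Rightarrow> real" where
  "scramble_coord b perm j x =
     (\<Sum>k. real (perm (j, map (digit b x) [1..<Suc k]) (digit b x (Suc k))) / real b ^ Suc k)"

definition scramble_point ::
    "nat \<Rightarrow> ('d \<times> nat list \<Rightarrow> nat \<Rightarrow> nat) \<Rightarrow> real ^ 'd \<Rightarrow> real ^ 'd" where
  "scramble_point b perm u = (\<chi> j. scramble_coord b perm j (u $ j))"

end

theory Submission
  imports Defs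
begin

(* Fix a coordinate j and cut the cube into the b^(m-t) slabs c b^(t-m) <= u_j < (c+1) b^(t-m).
   They are elementary boxes of volume b^(t-m), so each contains exactly b^t net points, and it
   suffices that points in different slabs almost surely get different values of g_theta.
   Two such points p, q differ in some base-b digit s <= m-t of their j-th coordinates. Under
   nested scrambling, the digits of the scrambled j-th coordinate of q after position s are
   produced by permutations that are used for nothing else: they are independent of all other
   scrambled digits of p and q and form a uniformly distributed number T. Given everything else,
   that coordinate is an affine function of T, and the hypothesis on g_theta says that a line
   parallel to the j-th axis meets each level set in a null set; by Fubini, g_theta takes the
   same value at the two scrambled points with probability zero. *)

lemma card_permutes_with_value:
  assumes S: "finite S" and x: "x \<in> S" and d: "d \<in> S"
  shows "card {p. p permutes S \<and> p x = d} = fact (card S - 1)"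
proof -
  let ?A = "{p. p permutes S \<and> p x = d}" and ?B = "{q. q permutes (S - {x})}"
  let ?swap = "\<lambda>p. Transposition.transpose x d \<circ> p"
  have "bij_betw ?swap ?A ?B"
  proof (rule bij_betw_byWitness[where f' = ?swap])
    show "\<forall>p\<in>?A. ?swap (?swap p) = p" "\<forall>q\<in>?B. ?swap (?swap q) = q"
      by (auto simp: fun_eq_iff)
    show "?swap ` ?A \<subseteq> ?B"
    proof safe
      fix p assume p: "p permutes S" "d = p x"
      have "Transposition.transpose x (p x) \<circ> p permutes S"
        using x d p by (intro permutes_compose permutes_swap_id) auto
      then show "Transposition.transpose x (p x) \<circ> p permutes S - {x}"
        by (rule permutes_superset) auto
    qed
    show "?swap ` ?B \<subseteq> ?A"
    proof safe
      fix q assume q: "q permutes S - {x}"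
      then have "q permutes S" by (rule permutes_subset) auto
      then show "?swap q permutes S"
        using x d by (intro permutes_compose permutes_swap_id) auto
      show "?swap q x = d" using q by (simp add: permutes_not_in)
    qed
  qed
  then have "card ?A = card ?B" by (rule bij_betw_same_card)
  also have "\<dots> = fact (card S - 1)"
    using S x by (intro card_permutations) auto
  finally show ?thesis .
qed

lemma measure_permutes_with_value:
  assumes "finite S" "x \<in> S" "d \<in> S"
  shows "measure (uniform_count_measure {p. p permutes S}) {p. p permutes S \<and> p x = d}
    = 1 / real (card S)"
proof -
  have "card S > 0" using assms card_gt_0_iff by blast
  then have "fact (card S) = real (card S) * fact (card S - 1)"
    by (metis fact_reduce of_nat_fact of_nat_mult)
  then show ?thesis
    using assms by (subst measure_uniform_count_measure)
      (auto simp: card_permutes_with_value card_permutations finite_permutations)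
qed

primrec base_value :: "nat \<Rightarrow> (nat \<Rightarrow> nat) \<Rightarrow> nat \<Rightarrow> nat" where
  "base_value b e 0 = 0"
| "base_value b e (Suc q) = b * base_value b e q + e q"

definition base_expansion :: "nat \<Rightarrow> (nat \<Rightarrow> nat) \<Rightarrow> real" where
  "base_expansion b e = (\<Sum>k. real (e k) / real b ^ Suc k)"

lemma base_value_less:
  assumes "\<forall>i<q. e i < b"
  shows "base_value b e q < b ^ q"
  using assms
proof (induction q)
  case (Suc q)
  then have "b * base_value b e q + e q < b * (base_value b e q + 1)" by simp
  also have "\<dots> \<le> b * b ^ q" using Suc by (intro mult_le_mono2) auto
  finally show ?case by simp
qed simp

lemma base_value_eq_iff:
  assumes "0 < b" "\<forall>i<q. e i < b" "c < b ^ q"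
  shows "base_value b e q = c \<longleftrightarrow> (\<forall>i<q. e i = c div b ^ (q - 1 - i) mod b)"
  using assms(2,3)
proof (induction q arbitrary: c)
  case (Suc q)
  have "c div b < b ^ q"
    using Suc.prems assms(1) by (simp add: div_less_iff_less_mult mult.commute)
  moreover have "c div b div b ^ (q - 1 - i) = c div b ^ (Suc q - 1 - i)" if "i < q" for i
  proof -
    have "Suc q - 1 - i = Suc (q - 1 - i)" using that by simp
    then show ?thesis by (simp add: div_mult2_eq)
  qed
  moreover have "b * base_value b e q + e q = c \<longleftrightarrow> base_value b e q = c div b \<and> e q = c mod b"
    using assms(1) Suc.prems(1) by (auto simp: mult.commute[of b])
  ultimately show ?case
    using Suc by (auto simp: less_Suc_eq)
qed simp

lemma sum_digits_eq_base_value: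
  assumes "0 < b"
  shows "(\<Sum>i<q. real (e i) / real b ^ Suc i) = real (base_value b e q) / real b ^ q"
  using assms by (induction q) (simp_all add: field_simps)

lemma summable_base_expansion:
  assumes b: "2 \<le> b" and e: "\<forall>k. e k < b"
  shows "summable (\<lambda>k. real (e k) / real b ^ Suc k)"
proof (rule summable_comparison_test')
  show "summable (\<lambda>k. (1 / real b) ^ k)" using b by (intro summable_geometric) auto
  fix k
  have "real (e k) / real b ^ Suc k \<le> real b / real b ^ Suc k"
    using b e by (intro divide_right_mono) (auto simp: less_imp_le)
  then show "norm (real (e k) / real b ^ Suc k) \<le> (1 / real b) ^ k"
    using b by (simp add: power_divide)
qed

lemma base_expansion_split:
  assumes "2 \<le> b" "\<forall>k. e k < b"
  shows "base_expansion b e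
    = (\<Sum>k<s. real (e k) / real b ^ Suc k) + base_expansion b (\<lambda>k. e (s + k)) / real b ^ s"
proof -
  let ?f = "\<lambda>k. real (e k) / real b ^ Suc k"
  have "summable (\<lambda>k. real (e (s + k)) / real b ^ Suc k)"
    using assms by (intro summable_base_expansion) auto
  then have "(\<Sum>k. ?f (k + s)) = base_expansion b (\<lambda>k. e (s + k)) / real b ^ s"
    unfolding base_expansion_def
    by (subst suminf_divide[symmetric]) (simp_all add: add.commute power_add mult_ac)
  then show ?thesis
    using suminf_split_initial_segment[OF summable_base_expansion[OF assms], of s]
    by (simp add: base_expansion_def)
qed

lemma base_expansion_bounds:
  assumes b: "2 \<le> b" and e: "\<forall>k. e k < b"
  shows "real (base_value b e q) / real b ^ q \<le> base_expansion b e"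
    and "base_expansion b e \<le> (real (base_value b e q) + 1) / real b ^ q"
proof -
  have b0: "0 < b" using b by simp
  have tail: "0 \<le> base_expansion b (\<lambda>k. e (q + k))" "base_expansion b (\<lambda>k. e (q + k)) \<le> 1"
  proof -
    let ?f = "\<lambda>k. real (e (q + k)) / real b ^ Suc k"
    have sf: "summable ?f" using assms by (intro summable_base_expansion) auto
    show "0 \<le> base_expansion b (\<lambda>k. e (q + k))"
      unfolding base_expansion_def by (intro suminf_nonneg[OF sf]) simp
    show "base_expansion b (\<lambda>k. e (q + k)) \<le> 1"
      unfolding base_expansion_def
    proof (rule suminf_le_const[OF sf])
      fix n
      have "sum ?f {..<n} = real (base_value b (\<lambda>k. e (q + k)) n) / real b ^ n"
        using b0 by (rule sum_digits_eq_base_value)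
      also have "\<dots> \<le> 1"
        using base_value_less[of n "\<lambda>k. e (q + k)" b] e b0
        by (simp add: divide_le_eq_1 less_imp_le flip: of_nat_power)
      finally show "sum ?f {..<n} \<le> 1" .
    qed
  qed
  have "base_expansion b e = (real (base_value b e q) + base_expansion b (\<lambda>k. e (q + k))) / real b ^ q"
    using base_expansion_split[OF assms, of q] sum_digits_eq_base_value[OF b0, of e q]
    by (simp add: add_divide_distrib)
  then show "real (base_value b e q) / real b ^ q \<le> base_expansion b e"
    and "base_expansion b e \<le> (real (base_value b e q) + 1) / real b ^ q"
    using tail b0 by (simp_all add: divide_right_mono)
qed

lemma digit_less: "0 < b \<Longrightarrow> digit b x k < b"
  by (simp add: digit_def)

lemma nat_floor_mult_power_Suc:
  assumes "0 \<le> x" "0 < b"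
  shows "nat \<lfloor>x * real b ^ Suc s\<rfloor> = b * nat \<lfloor>x * real b ^ s\<rfloor> + digit b x (Suc s)"
proof -
  let ?y = "x * real b ^ Suc s"
  have "x * real b ^ s = ?y / real_of_int (int b)" using assms by simp
  then have "\<lfloor>x * real b ^ s\<rfloor> = \<lfloor>?y\<rfloor> div int b"
    using floor_divide_real_eq_div[of "int b" ?y] by simp
  then have "nat \<lfloor>x * real b ^ s\<rfloor> = nat \<lfloor>?y\<rfloor> div b"
    using assms by (simp add: nat_div_distrib)
  then show ?thesis unfolding digit_def by simp
qed

lemma nat_floor_mult_power_eq_iff:
  assumes "0 \<le> x" "0 < b"
  shows "nat \<lfloor>x * real b ^ r\<rfloor> = c \<longleftrightarrow> real c / real b ^ r \<le> x \<and> x < real (c + 1) / real b ^ r"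
proof -
  have "nat \<lfloor>x * real b ^ r\<rfloor> = c \<longleftrightarrow> real c \<le> x * real b ^ r \<and> x * real b ^ r < real c + 1"
    using assms by (auto simp: floor_eq_iff nat_eq_iff)
  also have "\<dots> \<longleftrightarrow> real c / real b ^ r \<le> x \<and> x < real (c + 1) / real b ^ r"
    using assms by (simp add: divide_le_eq less_divide_eq add.commute)
  finally show ?thesis .
qed

lemma digit_differs_if_nat_floor_differs:
  assumes "0 \<le> x" "x < 1" "0 \<le> y" "y < 1" "0 < b"
    and "nat \<lfloor>x * real b ^ r\<rfloor> \<noteq> nat \<lfloor>y * real b ^ r\<rfloor>"
  obtains s where "1 \<le> s" "s \<le> r" "digit b x s \<noteq> digit b y s"
proof -
  have "nat \<lfloor>x * real b ^ r'\<rfloor> = nat \<lfloor>y * real b ^ r'\<rfloor>"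
    if "\<forall>s\<in>{1..r'}. digit b x s = digit b y s" for r'
    using that
  proof (induction r')
    case 0
    then show ?case using assms by (simp add: floor_eq_iff)
  next
    case (Suc r')
    then show ?case using nat_floor_mult_power_Suc[of _ b r'] assms by auto
  qed
  then show thesis using assms(6) that by fastforce
qed

lemma tmd_net_in_unit_cube:
  assumes "tmd_net b t m u" "i < b ^ m"
  shows "0 \<le> u i $ j" "u i $ j < 1"
  using assms unfolding tmd_net_def by auto

lemma tmd_net_nat_floor_less:
  assumes "tmd_net b t m u" "i < b ^ m" "0 < b"
  shows "nat \<lfloor>u i $ j * real b ^ r\<rfloor> < b ^ r"
proof -
  have "u i $ j * real b ^ r < real b ^ r"
    using tmd_net_in_unit_cube[OF assms(1,2), of j] assms(3) by simp
  then have "\<lfloor>u i $ j * real b ^ r\<rfloor> < int (b ^ r)"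
    by (simp add: floor_less_iff)
  then show ?thesis
    using tmd_net_in_unit_cube[OF assms(1,2), of j] by (simp add: nat_less_iff)
qed

lemma tmd_net_card_slab:
  assumes net: "tmd_net b t m u" and "t \<le> m" "0 < b" and c: "c < b ^ (m - t)"
  shows "card {i. i < b ^ m \<and> nat \<lfloor>u i $ j * real b ^ (m - t)\<rfloor> = c} = b ^ t"
proof -
  define k where "k j' = (if j' = j then m - t else 0)" for j'
  define cs where "cs j' = (if j' = j then c else 0)" for j'
  have "real b ^ m = real b ^ t * real b ^ (m - t)"
    using assms by (simp flip: power_add)
  then have "real b ^ t / real b ^ m = 1 / real b ^ (\<Sum>j'\<in>UNIV. k j')"
    using assms by (simp add: k_def)
  moreover have "\<forall>j'. cs j' < b ^ k j'" using c by (simp add: cs_def k_def)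
  ultimately have card_box: "card {i. i < b ^ m \<and> (\<forall>j'. real (cs j') / real b ^ k j' \<le> u i $ j' \<and>
      u i $ j' < real (cs j' + 1) / real b ^ k j')} = b ^ t"
    using net unfolding tmd_net_def by blast
  have box_iff: "nat \<lfloor>u i $ j * real b ^ (m - t)\<rfloor> = c \<longleftrightarrow> (\<forall>j'. real (cs j') / real b ^ k j' \<le> u i $ j' \<and>
      u i $ j' < real (cs j' + 1) / real b ^ k j')"
    if "i < b ^ m" for i
    using nat_floor_mult_power_eq_iff[of "u i $ j" b "m - t" c] tmd_net_in_unit_cube[OF net that] assms
    by (auto simp: cs_def k_def)
  have "{i. i < b ^ m \<and> nat \<lfloor>u i $ j * real b ^ (m - t)\<rfloor> = c} = {i. i < b ^ m \<and>
      (\<forall>j'. real (cs j') / real b ^ k j' \<le> u i $ j' \<and> u i $ j' < real (cs j' + 1) / real b ^ k j')}"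
    by (intro Collect_cong conj_cong refl box_iff)
  then show ?thesis
    by (simp only: card_box)
qed

lemma coord_upd_nth [simp]: "coord_upd v j x $ k = (if k = j then x else v $ k)"
  by (simp add: coord_upd_def)

lemma borel_measurable_vecI:
  fixes f :: "'a \<Rightarrow> real ^ 'd"
  assumes "\<And>j. (\<lambda>x. f x $ j) \<in> borel_measurable N"
  shows "f \<in> borel_measurable N"
proof (subst borel_measurable_euclidean_space, intro ballI)
  fix i :: "real ^ 'd" assume "i \<in> Basis"
  then obtain j where "i = axis j 1" by (auto simp: Basis_vec_def)
  then show "(\<lambda>x. f x \<bullet> i) \<in> borel_measurable N"
    using assms[of j] by (simp add: inner_axis)
qed

lemma open_open_unit_cube: "open (open_unit_cube :: (real ^ 'd) set)"
proof -
  have "open_unit_cube = (\<Inter>j. {x :: real ^ 'd. 0 < x $ j} \<inter> {x. x $ j < 1})"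
    by (auto simp: open_unit_cube_def)
  also have "open \<dots>"
    by (intro open_INT ballI open_Int open_halfspace_component_lt_cart
        open_halfspace_component_gt_cart) simp
  finally show ?thesis .
qed

lemma open_unit_cube_sets [measurable]: "open_unit_cube \<in> sets borel"
  using open_open_unit_cube by (rule borel_open)

lemma borel_measurable_indicator_open_unit_cube_mult:
  assumes "h \<in> borel_measurable (restrict_space borel open_unit_cube)"
  shows "(\<lambda>z. indicator open_unit_cube z * h z :: real) \<in> borel_measurable borel"
  using assms by (subst (asm) borel_measurable_restrict_space_iff) auto

lemma AE_coord_upd_affine_not_level:
  fixes h :: "real ^ 'd \<Rightarrow> real"
  assumes h_meas: "h \<in> borel_measurable (restrict_space borel open_unit_cube)"
    and h_level: "\<And>v y. v \<in> open_unit_cube \<Longrightarrow>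
      measure (uniform_measure lborel {0<..<1}) {x \<in> {0<..<1}. h (coord_upd v j x) = y} = 0"
    and c: "c \<noteq> 0"
  shows "AE t in lborel. coord_upd v j (a + c * t) \<in> open_unit_cube \<longrightarrow>
    h (coord_upd v j (a + c * t)) \<noteq> y"
proof (cases "\<forall>k. k \<noteq> j \<longrightarrow> 0 < v $ k \<and> v $ k < 1")
  case False
  then show ?thesis by (auto simp: open_unit_cube_def)
next
  case True
  define v' where "v' = coord_upd v j (1 / 2)"
  have v': "v' \<in> open_unit_cube"
    using True by (auto simp: v'_def open_unit_cube_def)
  have upd_v': "coord_upd v' j = coord_upd v j"
    by (simp add: v'_def fun_eq_iff vec_eq_iff)
  define Z where "Z = {x \<in> {0<..<1}. h (coord_upd v j x) = y}"
  define h' where "h' w = indicator open_unit_cube w * h w" for w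
  have [measurable]: "h' \<in> borel_measurable borel"
    using h_meas unfolding h'_def by (rule borel_measurable_indicator_open_unit_cube_mult)
  have [measurable]: "(\<lambda>x. coord_upd v j x) \<in> borel_measurable borel"
    by (rule borel_measurable_vecI) simp
  have "coord_upd v j x \<in> open_unit_cube" if "x \<in> {0<..<1}" for x
    using v' that by (auto simp: open_unit_cube_def simp flip: upd_v')
  then have "Z = {x \<in> space borel. x \<in> {0<..<1} \<and> h' (coord_upd v j x) = y}"
    by (auto simp: Z_def h'_def)
  also have "\<dots> \<in> sets borel" by measurable
  finally have Z_sets [measurable]: "Z \<in> sets borel" .
  interpret U: prob_space "uniform_measure lborel {0<..<1 :: real}"
    by (rule prob_space_uniform_measure) auto
  have "emeasure (uniform_measure lborel {0<..<1 :: real}) Z = 0"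
    using h_level[OF v', of y] by (simp add: Z_def upd_v' U.emeasure_eq_measure)
  moreover have "{0<..<1} \<inter> Z = Z" by (auto simp: Z_def)
  ultimately have "emeasure lborel Z = 0"
    by (simp add: emeasure_uniform_measure)
  then have "AE x in lborel. x \<notin> Z"
    by (subst AE_iff_measurable[of Z]) auto
  then have "AE t in lborel. a + c * t \<notin> Z"
    using c by (intro AE_borel_affine) auto
  then show ?thesis
    by eventually_elim (auto simp: Z_def open_unit_cube_def)
qed

lemma (in prob_space) AE_indep_pair_notin:
  assumes indep: "indep_var N X N' Y" and \<Phi>: "\<Phi> \<in> sets (N \<Otimes>\<^sub>M N')"
    and slices: "\<And>x. x \<in> space N \<Longrightarrow> AE \<omega> in M. (x, Y \<omega>) \<notin> \<Phi>"
  shows "AE \<omega> in M. (X \<omega>, Y \<omega>) \<notin> \<Phi>"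
proof -
  have X: "X \<in> measurable M N" and Y: "Y \<in> measurable M N'"
    using indep_var_rv1[OF indep] indep_var_rv2[OF indep] .
  have XY: "(\<lambda>\<omega>. (X \<omega>, Y \<omega>)) \<in> measurable M (N \<Otimes>\<^sub>M N')"
    using X Y by (rule measurable_Pair)
  interpret Y: prob_space "distr M N' Y" using Y by (rule prob_space_distr)
  have "emeasure M ((\<lambda>\<omega>. (X \<omega>, Y \<omega>)) -` \<Phi> \<inter> space M)
      = emeasure (distr M (N \<Otimes>\<^sub>M N') (\<lambda>\<omega>. (X \<omega>, Y \<omega>))) \<Phi>"
    using \<Phi> XY by (simp add: emeasure_distr)
  also have "\<dots> = emeasure (distr M N X \<Otimes>\<^sub>M distr M N' Y) \<Phi>"
    using indep by (simp add: indep_var_distribution_eq)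
  also have "\<dots> = (\<integral>\<^sup>+ x. emeasure (distr M N' Y) (Pair x -` \<Phi>) \<partial>distr M N X)"
    using \<Phi> by (intro Y.emeasure_pair_measure_alt) simp
  also have "\<dots> = (\<integral>\<^sup>+ x. 0 \<partial>distr M N X)"
  proof (rule nn_integral_cong)
    fix x assume "x \<in> space (distr M N X)"
    then have "AE \<omega> in M. Y \<omega> \<notin> Pair x -` \<Phi>" using slices by simp
    moreover have P: "Pair x -` \<Phi> \<in> sets N'" using \<Phi> by (rule sets_Pair1)
    moreover have "{y \<in> space N'. y \<notin> Pair x -` \<Phi>} = space N' - Pair x -` \<Phi>" by auto
    ultimately have "AE y in distr M N' Y. y \<notin> Pair x -` \<Phi>"
      using Y by (subst AE_distr_iff) auto
    then have "Pair x -` \<Phi> \<in> null_sets (distr M N' Y)"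
      using P by (subst AE_iff_null_sets) auto
    then show "emeasure (distr M N' Y) (Pair x -` \<Phi>) = 0" by auto
  qed
  finally have "emeasure M ((\<lambda>\<omega>. (X \<omega>, Y \<omega>)) -` \<Phi> \<inter> space M) = 0" by simp
  moreover have "(\<lambda>\<omega>. (X \<omega>, Y \<omega>)) -` \<Phi> \<inter> space M = {\<omega> \<in> space M. (X \<omega>, Y \<omega>) \<in> \<Phi>}"
    by auto
  ultimately show ?thesis
    using measurable_sets[OF XY \<Phi>] by (subst AE_iff_measurable[OF _ refl]) auto
qed

locale random_digits = prob_space +
  fixes b :: nat and D :: "nat \<Rightarrow> 'a \<Rightarrow> nat"
  assumes base_ge_2: "2 \<le> b"
    and measurable_digit [measurable]: "\<And>k. D k \<in> measurable M (count_space UNIV)"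
    and digit_less_base: "\<And>k \<omega>. \<omega> \<in> space M \<Longrightarrow> D k \<omega> < b"
    and prob_digits_eq: "\<And>q e. \<forall>i<q. e i < b \<Longrightarrow>
      prob {\<omega> \<in> space M. \<forall>i<q. D i \<omega> = e i} = 1 / real b ^ q"
begin

abbreviation expansion :: "'a \<Rightarrow> real" where
  "expansion \<omega> \<equiv> base_expansion b (\<lambda>k. D k \<omega>)"

lemma measurable_base_value [measurable]:
  "(\<lambda>\<omega>. base_value b (\<lambda>k. D k \<omega>) q) \<in> measurable M (count_space UNIV)"
  by (induction q) simp_all

lemma borel_measurable_expansion [measurable]: "expansion \<in> borel_measurable M"
  unfolding base_expansion_def by measurable

lemma expansion_bounds:
  assumes "\<omega> \<in> space M"
  shows "real (base_value b (\<lambda>k. D k \<omega>) q) / real b ^ q \<le> expansion \<omega>"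
    and "expansion \<omega> \<le> (real (base_value b (\<lambda>k. D k \<omega>) q) + 1) / real b ^ q"
  using base_expansion_bounds[OF base_ge_2] digit_less_base[OF assms] by auto

lemma expansion_in_unit_interval: "\<omega> \<in> space M \<Longrightarrow> expansion \<omega> \<in> {0..1}"
  using expansion_bounds[where q = 0] by auto

lemma prob_base_value_less:
  "prob {\<omega> \<in> space M. base_value b (\<lambda>k. D k \<omega>) q < c} = real (min c (b ^ q)) / real b ^ q"
proof -
  let ?V = "\<lambda>\<omega>. base_value b (\<lambda>k. D k \<omega>) q"
  have V_less: "?V \<omega> < b ^ q" if "\<omega> \<in> space M" for \<omega>
    using digit_less_base[OF that] by (intro base_value_less) auto
  have prob_V: "prob {\<omega> \<in> space M. ?V \<omega> = c'} = 1 / real b ^ q" if "c' < b ^ q" for c'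
  proof -
    have "?V \<omega> = c' \<longleftrightarrow> (\<forall>i<q. D i \<omega> = c' div b ^ (q - 1 - i) mod b)" if "\<omega> \<in> space M" for \<omega>
      using base_ge_2 \<open>c' < b ^ q\<close> digit_less_base[OF that] by (intro base_value_eq_iff) auto
    then have "{\<omega> \<in> space M. ?V \<omega> = c'}
        = {\<omega> \<in> space M. \<forall>i<q. D i \<omega> = c' div b ^ (q - 1 - i) mod b}"
      by auto
    then show ?thesis
      using base_ge_2 by (simp add: prob_digits_eq)
  qed
  have "{\<omega> \<in> space M. ?V \<omega> < c} = (\<Union>c'\<in>{..<min c (b ^ q)}. {\<omega> \<in> space M. ?V \<omega> = c'})"
    using V_less by auto
  also have "prob \<dots> = (\<Sum>c'\<in>{..<min c (b ^ q)}. prob {\<omega> \<in> space M. ?V \<omega> = c'})"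
    by (intro finite_measure_finite_Union) (auto simp: disjoint_family_on_def)
  also have "\<dots> = real (min c (b ^ q)) / real b ^ q"
    by (simp add: prob_V)
  finally show ?thesis .
qed

lemma prob_expansion_le_approx:
  assumes x: "0 \<le> x" "x \<le> 1"
  shows "\<bar>prob {\<omega> \<in> space M. expansion \<omega> \<le> x} - x\<bar> \<le> 1 / real b ^ q"
proof -
  let ?F = "prob {\<omega> \<in> space M. expansion \<omega> \<le> x}"
  let ?V = "\<lambda>\<omega>. base_value b (\<lambda>k. D k \<omega>) q"
  define c where "c = nat \<lfloor>x * real b ^ q\<rfloor>"
  have bq: "0 < real b ^ q" using base_ge_2 by simp
  have c: "real c \<le> x * real b ^ q" "x * real b ^ q < real c + 1"
    using x bq by (auto simp: c_def of_nat_floor)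
  have "x * real b ^ q \<le> real b ^ q"
    using x bq by (simp add: mult_left_le_one_le)
  then have "c \<le> b ^ q"
    using c by (metis of_nat_le_iff of_nat_power order.trans)
  have "{\<omega> \<in> space M. ?V \<omega> < c} \<subseteq> {\<omega> \<in> space M. expansion \<omega> \<le> x}"
  proof safe
    fix \<omega> assume \<omega>: "\<omega> \<in> space M" and "?V \<omega> < c"
    then have "(real (?V \<omega>) + 1) / real b ^ q \<le> x"
      using c bq by (simp add: divide_le_eq)
    then show "expansion \<omega> \<le> x" using expansion_bounds(2)[OF \<omega>, of q] by linarith
  qed
  then have "prob {\<omega> \<in> space M. ?V \<omega> < c} \<le> ?F"
    by (intro finite_measure_mono) measurable
  then have lower: "real c / real b ^ q \<le> ?F"
    using prob_base_value_less[of q c] \<open>c \<le> b ^ q\<close> by simp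
  have "{\<omega> \<in> space M. expansion \<omega> \<le> x} \<subseteq> {\<omega> \<in> space M. ?V \<omega> < c + 1}"
  proof safe
    fix \<omega> assume \<omega>: "\<omega> \<in> space M" and "expansion \<omega> \<le> x"
    then have "real (?V \<omega>) / real b ^ q \<le> x"
      using expansion_bounds(1)[OF \<omega>, of q] by linarith
    then have "real (?V \<omega>) \<le> x * real b ^ q"
      using bq by (simp add: divide_le_eq)
    then show "?V \<omega> < c + 1" using c by linarith
  qed
  then have "?F \<le> prob {\<omega> \<in> space M. ?V \<omega> < c + 1}"
    by (intro finite_measure_mono) measurable
  also have "\<dots> \<le> (real c + 1) / real b ^ q"
    unfolding prob_base_value_less using bq by (intro divide_right_mono) auto
  finally have upper: "?F \<le> (real c + 1) / real b ^ q" .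
  show ?thesis
    using lower upper c bq by (simp add: abs_le_iff field_simps)
qed

lemma prob_expansion_le:
  assumes "0 \<le> x" "x \<le> 1"
  shows "prob {\<omega> \<in> space M. expansion \<omega> \<le> x} = x"
proof (rule ccontr)
  assume "prob {\<omega> \<in> space M. expansion \<omega> \<le> x} \<noteq> x"
  then obtain q where "(1 / real b) ^ q < \<bar>prob {\<omega> \<in> space M. expansion \<omega> \<le> x} - x\<bar>"
    using base_ge_2 real_arch_pow_inv by fastforce
  then show False
    using prob_expansion_le_approx[OF assms, of q] by (simp add: power_one_over)
qed

lemma AE_expansion:
  assumes [measurable]: "Measurable.pred borel P" and "AE t in lborel. P t"
  shows "AE \<omega> in M. P (expansion \<omega>)"
proof -
  have "distributed M lborel expansion (\<lambda>t. indicator {0..1} t / measure lborel {0..1 :: real})"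
    by (rule uniform_distrI_borel_atLeastAtMost) (simp_all add: prob_expansion_le)
  then have "distr M lborel expansion = density lborel (\<lambda>t. indicator {0..1} t / measure lborel {0..1 :: real})"
    by (rule distributed_distr_eq_density)
  moreover have "AE t in density lborel (\<lambda>t. indicator {0..1} t / measure lborel {0..1 :: real}). P t"
    using assms(2) by (subst AE_density) (auto elim: eventually_mono)
  ultimately have "AE t in distr M lborel expansion. P t"
    by (simp only:)
  then show ?thesis
    by (subst (asm) AE_distr_iff) auto
qed

lemma AE_expansion_in_open_unit_interval: "AE \<omega> in M. expansion \<omega> \<in> {0<..<1}"
proof -
  have "AE \<omega> in M. expansion \<omega> \<noteq> 0 \<and> expansion \<omega> \<noteq> 1"
    by (intro AE_expansion) (auto intro: AE_lborel_singleton)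
  then show ?thesis
    using AE_space by eventually_elim (auto dest!: expansion_in_unit_interval)
qed

end

locale indep_uniform_permutations = prob_space M for M :: "'w measure" +
  fixes b :: nat and \<pi> :: "'i \<Rightarrow> 'w \<Rightarrow> nat \<Rightarrow> nat"
  assumes base_ge_2: "2 \<le> b"
    and indep_perms: "indep_vars (\<lambda>_. uniform_count_measure {p. p permutes {0..<b}}) \<pi> UNIV"
    and distr_perm: "\<And>\<iota>. distr M (uniform_count_measure {p. p permutes {0..<b}}) (\<pi> \<iota>)
      = uniform_count_measure {p. p permutes {0..<b}}"
begin

abbreviation uniform_perms :: "(nat \<Rightarrow> nat) measure" where
  "uniform_perms \<equiv> uniform_count_measure {p. p permutes {0..<b}}"

lemma measurable_perm: "\<pi> \<iota> \<in> measurable M uniform_perms"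
  using indep_perms unfolding indep_vars_def2 by auto

lemma perm_permutes: "\<omega> \<in> space M \<Longrightarrow> \<pi> \<iota> \<omega> permutes {0..<b}"
  using measurable_space[OF measurable_perm] by (simp add: space_uniform_count_measure)

lemma perm_less: "\<omega> \<in> space M \<Longrightarrow> d < b \<Longrightarrow> \<pi> \<iota> \<omega> d < b"
  using perm_permutes permutes_in_image by fastforce

lemma measurable_from_uniform_perms: "f \<in> measurable uniform_perms (count_space UNIV)"
  by (subst measurable_cong_sets[OF sets_uniform_count_measure_count_space refl])
     (simp add: measurable_count_space_eq1)

lemma borel_measurable_from_uniform_perms: "f \<in> borel_measurable uniform_perms"
  by (subst measurable_cong_sets[OF sets_uniform_count_measure_count_space refl]) simp

lemma measurable_perm_apply [measurable]: "(\<lambda>\<omega>. \<pi> \<iota> \<omega> x) \<in> measurable M (count_space UNIV)"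
  using measurable_comp[OF measurable_perm measurable_from_uniform_perms] by (simp add: o_def)

lemma borel_measurable_PiM_component:
  assumes "i \<in> J"
  shows "(\<lambda>x. f (x i) :: real) \<in> borel_measurable (PiM J (\<lambda>_. uniform_perms))"
  using measurable_comp[OF measurable_component_singleton[OF assms]
      borel_measurable_from_uniform_perms]
  by (simp add: o_def)

lemma restrict_perms_in_space:
  "\<omega> \<in> space M \<Longrightarrow> restrict (\<lambda>i. \<pi> i \<omega>) I \<in> space (PiM I (\<lambda>_. uniform_perms))"
  using measurable_space[OF measurable_restrict[where X = \<pi> and I = I, OF measurable_perm]] by simp

lemma prob_perm_apply_eq:
  assumes "x < b" "d < b"
  shows "prob {\<omega> \<in> space M. \<pi> \<iota> \<omega> x = d} = 1 / real b"
proof -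
  let ?A = "{p. p permutes {0..<b} \<and> p x = d}"
  have "{\<omega> \<in> space M. \<pi> \<iota> \<omega> x = d} = \<pi> \<iota> -` ?A \<inter> space M"
    using perm_permutes by auto
  also have "prob \<dots> = measure (distr M uniform_perms (\<pi> \<iota>)) ?A"
    by (subst measure_distr[OF measurable_perm]) (auto simp: sets_uniform_count_measure)
  also have "\<dots> = 1 / real b"
    using assms by (simp add: distr_perm measure_permutes_with_value)
  finally show ?thesis .
qed

lemma prob_perms_apply_eq:
  assumes \<iota>: "inj \<iota>" and "\<forall>i<q. xs i < b" "\<forall>i<q. e i < b"
  shows "prob {\<omega> \<in> space M. \<forall>i<q. \<pi> (\<iota> i) \<omega> (xs i) = e i} = 1 / real b ^ q"
proof (cases "q = 0")
  case False
  define A where "A j = {p. p permutes {0..<b} \<and> p (xs (inv \<iota> j)) = e (inv \<iota> j)}" for j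
  have "{\<omega> \<in> space M. \<forall>i<q. \<pi> (\<iota> i) \<omega> (xs i) = e i} = (\<Inter>j\<in>\<iota> ` {..<q}. \<pi> j -` A j \<inter> space M)"
    using False \<iota> perm_permutes by (auto simp: A_def)
  also have "prob \<dots> = (\<Prod>j\<in>\<iota> ` {..<q}. prob (\<pi> j -` A j \<inter> space M))"
    using False by (intro indep_varsD[OF indep_perms]) (auto simp: sets_uniform_count_measure A_def)
  also have "\<dots> = (\<Prod>i<q. prob (\<pi> (\<iota> i) -` A (\<iota> i) \<inter> space M))"
    using \<iota> by (subst prod.reindex) (auto intro: inj_on_subset)
  also have "\<dots> = (\<Prod>i<q. 1 / real b)"
  proof (rule prod.cong[OF refl])
    fix i assume "i \<in> {..<q}"
    moreover have "\<pi> (\<iota> i) -` A (\<iota> i) \<inter> space M = {\<omega> \<in> space M. \<pi> (\<iota> i) \<omega> (xs i) = e i}"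
      using \<iota> perm_permutes by (auto simp: A_def)
    ultimately show "prob (\<pi> (\<iota> i) -` A (\<iota> i) \<inter> space M) = 1 / real b"
      using assms by (simp add: prob_perm_apply_eq)
  qed
  finally show ?thesis by (simp add: power_one_over)
qed (simp add: prob_space)

lemma random_digits_perms_apply:
  assumes "inj \<iota>" "\<forall>k. xs k < b"
  shows "random_digits M b (\<lambda>k \<omega>. \<pi> (\<iota> k) \<omega> (xs k))"
  using assms by unfold_locales (auto simp: base_ge_2 perm_less prob_perms_apply_eq)

lemma AE_restrict_base_expansion_notin:
  assumes \<iota>: "inj \<iota>" and xs: "\<forall>k. xs k < b"
    and \<Phi>: "\<Phi> \<in> sets (PiM (- range \<iota>) (\<lambda>_. uniform_perms) \<Otimes>\<^sub>M borel)"
    and slices: "\<And>x. x \<in> space (PiM (- range \<iota>) (\<lambda>_. uniform_perms)) \<Longrightarrow>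
      AE t in lborel. (x, t) \<notin> \<Phi>"
  shows "AE \<omega> in M. (restrict (\<lambda>i. \<pi> i \<omega>) (- range \<iota>),
    base_expansion b (\<lambda>k. \<pi> (\<iota> k) \<omega> (xs k))) \<notin> \<Phi>"
proof -
  let ?N = "PiM (- range \<iota>) (\<lambda>_. uniform_perms)" and ?N' = "PiM (range \<iota>) (\<lambda>_. uniform_perms)"
  interpret random_digits M b "\<lambda>k \<omega>. \<pi> (\<iota> k) \<omega> (xs k)"
    using \<iota> xs by (rule random_digits_perms_apply)
  define f where "f y = base_expansion b (\<lambda>k. y (\<iota> k) (xs k))" for y :: "'i \<Rightarrow> nat \<Rightarrow> nat"
  have [measurable]: "f \<in> borel_measurable ?N'"
    unfolding f_def base_expansion_def
    by (intro borel_measurable_suminf borel_measurable_PiM_component) simp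
  define \<Phi>' where "\<Phi>' = (\<lambda>(x, y). (x, f y)) -` \<Phi> \<inter> space (?N \<Otimes>\<^sub>M ?N')"
  have "(\<lambda>(x, y). (x, f y)) \<in> measurable (?N \<Otimes>\<^sub>M ?N') (?N \<Otimes>\<^sub>M borel)"
    by measurable
  then have \<Phi>'_sets: "\<Phi>' \<in> sets (?N \<Otimes>\<^sub>M ?N')"
    unfolding \<Phi>'_def using \<Phi> by (rule measurable_sets)
  have slices': "AE \<omega> in M. (x, restrict (\<lambda>i. \<pi> i \<omega>) (range \<iota>)) \<notin> \<Phi>'"
    if x: "x \<in> space ?N" for x
  proof -
    have "Measurable.pred borel (\<lambda>t. (x, t) \<notin> \<Phi>)"
      using \<Phi> x by (simp add: pred_def sets_Pair1 Int_def conj_commute)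
    then have "AE \<omega> in M. (x, expansion \<omega>) \<notin> \<Phi>"
      using slices[OF x] by (rule AE_expansion)
    then show ?thesis
      by eventually_elim (simp add: \<Phi>'_def f_def)
  qed
  have "indep_var ?N (\<lambda>\<omega>. restrict (\<lambda>i. \<pi> i \<omega>) (- range \<iota>)) ?N' (\<lambda>\<omega>. restrict (\<lambda>i. \<pi> i \<omega>) (range \<iota>))"
    by (rule indep_var_restrict[OF indep_perms]) auto
  then have ae: "AE \<omega> in M. (restrict (\<lambda>i. \<pi> i \<omega>) (- range \<iota>), restrict (\<lambda>i. \<pi> i \<omega>) (range \<iota>)) \<notin> \<Phi>'"
    using \<Phi>'_sets slices' by (rule AE_indep_pair_notin)
  from ae show ?thesis
    using AE_space by eventually_elim (auto simp: \<Phi>'_def f_def space_pair_measure restrict_perms_in_space)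
qed

end

text \<open>\<open>scramble_index b j x k\<close> is the index \<open>(j, [a\<^sub>1, \<dots>, a\<^sub>k])\<close> of the permutation
  \<open>\<pi>\<^bsub>j a\<^sub>1 \<dots> a\<^sub>k\<^esub>\<close> that scrambles digit \<open>k + 1\<close> of \<open>x\<close>.\<close>
definition scramble_index :: "nat \<Rightarrow> 'd \<Rightarrow> real \<Rightarrow> nat \<Rightarrow> 'd \<times> nat list" where
  "scramble_index b j x k = (j, map (digit b x) [1..<Suc k])"

lemma scramble_coord_eq_base_expansion:
  "scramble_coord b perm j x
    = base_expansion b (\<lambda>k. perm (scramble_index b j x k) (digit b x (Suc k)))"
  by (simp add: scramble_coord_def base_expansion_def scramble_index_def)

lemma scramble_index_eq_iff:
  "scramble_index b j x k = scramble_index b j' x' k' \<longleftrightarrow>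
    j = j' \<and> k = k' \<and> (\<forall>r\<in>{1..k}. digit b x r = digit b x' r)"
proof -
  have "map (digit b x) [1..<Suc k] = map (digit b x') [1..<Suc k'] \<longleftrightarrow>
      k = k' \<and> (\<forall>r\<in>{1..k}. digit b x r = digit b x' r)"
  proof
    assume eq: "map (digit b x) [1..<Suc k] = map (digit b x') [1..<Suc k']"
    then have "length (map (digit b x) [1..<Suc k]) = length (map (digit b x') [1..<Suc k'])"
      by (rule arg_cong)
    then have "k = k'" by (simp only: length_map length_upt)
    with eq show "k = k' \<and> (\<forall>r\<in>{1..k}. digit b x r = digit b x' r)"
      by (simp add: map_eq_conv atLeastLessThanSuc_atLeastAtMost del: upt_Suc)
  qed (simp add: map_eq_conv atLeastLessThanSuc_atLeastAtMost del: upt_Suc)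
  then show ?thesis by (auto simp: scramble_index_def)
qed

lemma scramble_coord_split:
  assumes "2 \<le> b" "\<And>\<iota> d. d < b \<Longrightarrow> perm \<iota> d < b"
  shows "scramble_coord b perm j w
    = (\<Sum>k<s. real (perm (scramble_index b j w k) (digit b w (Suc k))) / real b ^ Suc k)
      + base_expansion b (\<lambda>k. perm (scramble_index b j w (s + k)) (digit b w (Suc (s + k))))
        / real b ^ s"
  using base_expansion_split[OF assms(1), of "\<lambda>k. perm (scramble_index b j w k) (digit b w (Suc k))" s]
    assms by (simp add: scramble_coord_eq_base_expansion digit_less)

lemma inj_scramble_index: "inj (scramble_index b j x)"
  by (auto intro!: injI simp: scramble_index_eq_iff)

lemma scramble_coord_restrict:
  assumes "\<And>k. scramble_index b j x k \<in> J"
  shows "scramble_coord b (restrict perm J) j x = scramble_coord b perm j x"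
  using assms by (simp add: scramble_coord_eq_base_expansion)

locale owen_scrambling = indep_uniform_permutations M b \<pi>
  for M :: "'w measure" and b :: nat and \<pi> :: "'d::finite \<times> nat list \<Rightarrow> 'w \<Rightarrow> nat \<Rightarrow> nat"
begin

lemma AE_scramble_point_in_open_unit_cube:
  "AE \<omega> in M. scramble_point b (\<lambda>\<iota>. \<pi> \<iota> \<omega>) p \<in> open_unit_cube"
proof -
  have "AE \<omega> in M. \<forall>j\<in>UNIV. scramble_coord b (\<lambda>\<iota>. \<pi> \<iota> \<omega>) j (p $ j) \<in> {0<..<1}"
  proof (rule AE_finite_allI)
    fix j :: 'd
    interpret random_digits M b "\<lambda>k \<omega>. \<pi> (scramble_index b j (p $ j) k) \<omega> (digit b (p $ j) (Suc k))"
      using base_ge_2 by (intro random_digits_perms_apply inj_scramble_index) (simp add: digit_less)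
    show "AE \<omega> in M. scramble_coord b (\<lambda>\<iota>. \<pi> \<iota> \<omega>) j (p $ j) \<in> {0<..<1}"
      unfolding scramble_coord_eq_base_expansion by (rule AE_expansion_in_open_unit_interval)
  qed simp
  then show ?thesis
    by (simp add: scramble_point_def open_unit_cube_def)
qed

lemma borel_measurable_scramble_coord:
  assumes "\<And>k. scramble_index b j x k \<in> J"
  shows "(\<lambda>perm. scramble_coord b perm j x) \<in> borel_measurable (PiM J (\<lambda>_. uniform_perms))"
  unfolding scramble_coord_eq_base_expansion base_expansion_def
  using assms by (intro borel_measurable_suminf borel_measurable_PiM_component)

lemma borel_measurable_scramble_point:
  assumes "\<And>j k. scramble_index b j (p $ j) k \<in> J"
  shows "(\<lambda>x. scramble_point b x p) \<in> borel_measurable (PiM J (\<lambda>_. uniform_perms))"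
  unfolding scramble_point_def
  using assms by (intro borel_measurable_vecI) (simp add: borel_measurable_scramble_coord)

lemma AE_coord_upd_tail_not_level:
  fixes h :: "real ^ 'd \<Rightarrow> real" and F :: "('d \<times> nat list \<Rightarrow> nat \<Rightarrow> nat) \<Rightarrow> real ^ 'd"
    and A V :: "('d \<times> nat list \<Rightarrow> nat \<Rightarrow> nat) \<Rightarrow> real" and j :: 'd and w :: real and s :: nat
  defines "J \<equiv> - range (\<lambda>k. scramble_index b j w (s + k))"
  defines "T \<equiv> \<lambda>\<omega>. base_expansion b (\<lambda>k. \<pi> (scramble_index b j w (s + k)) \<omega> (digit b w (Suc (s + k))))"
  assumes h_meas: "h \<in> borel_measurable (restrict_space borel open_unit_cube)"
    and h_level: "\<And>v y. v \<in> open_unit_cube \<Longrightarrow>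
      measure (uniform_measure lborel {0<..<1}) {x \<in> {0<..<1}. h (coord_upd v j x) = y} = 0"
    and F: "\<And>j'. j' \<noteq> j \<Longrightarrow> (\<lambda>x. F x $ j') \<in> borel_measurable (PiM J (\<lambda>_. uniform_perms))"
    and [measurable]: "A \<in> borel_measurable (PiM J (\<lambda>_. uniform_perms))"
      "V \<in> borel_measurable (PiM J (\<lambda>_. uniform_perms))"
  shows "AE \<omega> in M. let x = restrict (\<lambda>\<iota>. \<pi> \<iota> \<omega>) J; z = coord_upd (F x) j (A x + T \<omega> / real b ^ s)
    in z \<in> open_unit_cube \<longrightarrow> h z \<noteq> V x"
proof -
  let ?N = "PiM J (\<lambda>_. uniform_perms)"
  define Q where "Q x t = coord_upd (F x) j (A x + t / real b ^ s)" for x t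
  define h' where "h' z = indicator open_unit_cube z * h z" for z
  define \<Phi> where "\<Phi> = {xt \<in> space (?N \<Otimes>\<^sub>M borel). Q (fst xt) (snd xt) \<in> open_unit_cube \<and>
      h' (Q (fst xt) (snd xt)) = V (fst xt)}"
  have [measurable]: "h' \<in> borel_measurable borel"
    using h_meas unfolding h'_def by (rule borel_measurable_indicator_open_unit_cube_mult)
  have [measurable]: "(\<lambda>xt. Q (fst xt) (snd xt)) \<in> borel_measurable (?N \<Otimes>\<^sub>M borel)"
  proof (rule borel_measurable_vecI)
    fix j'
    show "(\<lambda>xt. Q (fst xt) (snd xt) $ j') \<in> borel_measurable (?N \<Otimes>\<^sub>M borel)"
      using F[of j'] by (cases "j' = j") (simp_all add: Q_def)
  qed
  have "\<Phi> \<in> sets (?N \<Otimes>\<^sub>M borel)"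
    unfolding \<Phi>_def by measurable
  moreover have "AE t in lborel. (x, t) \<notin> \<Phi>" for x
  proof -
    have "AE t in lborel. coord_upd (F x) j (A x + 1 / real b ^ s * t) \<in> open_unit_cube \<longrightarrow>
        h (coord_upd (F x) j (A x + 1 / real b ^ s * t)) \<noteq> V x"
      using base_ge_2 by (intro AE_coord_upd_affine_not_level h_meas h_level) auto
    then show ?thesis
      by eventually_elim (auto simp: \<Phi>_def Q_def h'_def)
  qed
  ultimately have "AE \<omega> in M. (restrict (\<lambda>\<iota>. \<pi> \<iota> \<omega>) J, T \<omega>) \<notin> \<Phi>"
    unfolding J_def T_def using base_ge_2
    by (intro AE_restrict_base_expansion_notin) (auto simp: inj_def scramble_index_eq_iff digit_less)
  then show ?thesis
    using AE_space by eventually_elim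
      (auto simp: \<Phi>_def Q_def h'_def space_pair_measure restrict_perms_in_space)
qed

lemma AE_scrambled_values_differ:
  fixes h :: "real ^ 'd \<Rightarrow> real"
  assumes h_meas: "h \<in> borel_measurable (restrict_space borel open_unit_cube)"
    and h_level: "\<And>v y. v \<in> open_unit_cube \<Longrightarrow>
      measure (uniform_measure lborel {0<..<1}) {x \<in> {0<..<1}. h (coord_upd v j x) = y} = 0"
    and s: "1 \<le> s" "digit b (p $ j) s \<noteq> digit b (q $ j) s"
  shows "AE \<omega> in M. h (scramble_point b (\<lambda>\<iota>. \<pi> \<iota> \<omega>) p) \<noteq> h (scramble_point b (\<lambda>\<iota>. \<pi> \<iota> \<omega>) q)"
proof -
  define w where "w = q $ j"
  let ?J = "- range (\<lambda>k. scramble_index b j w (s + k))"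
  let ?N = "PiM ?J (\<lambda>_. uniform_perms)"
  let ?T = "\<lambda>\<omega>. base_expansion b (\<lambda>k. \<pi> (scramble_index b j w (s + k)) \<omega> (digit b w (Suc (s + k))))"
  define head where "head x = (\<Sum>k<s. real (x (scramble_index b j w k) (digit b w (Suc k))) / real b ^ Suc k)"
    for x :: "'d \<times> nat list \<Rightarrow> nat \<Rightarrow> nat"
  define h' where "h' z = indicator open_unit_cube z * h z" for z
  have in_J: "scramble_index b j' y k \<in> ?J" if "j' \<noteq> j \<or> k < s \<or> digit b y s \<noteq> digit b w s"
    for j' y k
    using that s(1) by (auto simp: scramble_index_eq_iff)
  have [measurable]: "h' \<in> borel_measurable borel"
    using h_meas unfolding h'_def by (rule borel_measurable_indicator_open_unit_cube_mult)
  have p_in_J: "scramble_index b j' (p $ j') k \<in> ?J" for j' k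
    using s(2) by (intro in_J) (auto simp: w_def)
  have [measurable]: "(\<lambda>x. scramble_point b x p) \<in> borel_measurable ?N"
    using p_in_J by (rule borel_measurable_scramble_point)
  have q_meas: "(\<lambda>x. scramble_point b x q $ j') \<in> borel_measurable ?N" if "j' \<noteq> j" for j'
    using that unfolding scramble_point_def
    by (simp, intro borel_measurable_scramble_coord in_J) simp
  have head_meas: "head \<in> borel_measurable ?N"
    unfolding head_def by (intro borel_measurable_sum borel_measurable_PiM_component in_J) simp
  have ae: "AE \<omega> in M. let x = restrict (\<lambda>\<iota>. \<pi> \<iota> \<omega>) ?J;
      z = coord_upd (scramble_point b x q) j (head x + ?T \<omega> / real b ^ s)
    in z \<in> open_unit_cube \<longrightarrow> h z \<noteq> h' (scramble_point b x p)"
    by (rule AE_coord_upd_tail_not_level[OF h_meas h_level q_meas head_meas]) measurable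
  have p_restrict: "scramble_point b (restrict (\<lambda>\<iota>. \<pi> \<iota> \<omega>) ?J) p = scramble_point b (\<lambda>\<iota>. \<pi> \<iota> \<omega>) p" for \<omega>
    unfolding scramble_point_def using scramble_coord_restrict[OF p_in_J] by simp
  have q_restrict: "coord_upd (scramble_point b (restrict (\<lambda>\<iota>. \<pi> \<iota> \<omega>) ?J) q) j
      (head (restrict (\<lambda>\<iota>. \<pi> \<iota> \<omega>) ?J) + ?T \<omega> / real b ^ s) = scramble_point b (\<lambda>\<iota>. \<pi> \<iota> \<omega>) q"
    if \<omega>: "\<omega> \<in> space M" for \<omega>
  proof -
    have "head (restrict (\<lambda>\<iota>. \<pi> \<iota> \<omega>) ?J)
        = (\<Sum>k<s. real (\<pi> (scramble_index b j w k) \<omega> (digit b w (Suc k))) / real b ^ Suc k)"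
      using in_J[OF disjI2, OF disjI1] unfolding head_def by (intro sum.cong refl) simp
    moreover have "scramble_coord b (restrict (\<lambda>\<iota>. \<pi> \<iota> \<omega>) ?J) j' (q $ j')
        = scramble_coord b (\<lambda>\<iota>. \<pi> \<iota> \<omega>) j' (q $ j')" if "j' \<noteq> j" for j'
      using that by (intro scramble_coord_restrict in_J) simp
    ultimately show ?thesis
      using scramble_coord_split[where perm = "\<lambda>\<iota>. \<pi> \<iota> \<omega>" and j = j and w = w and s = s,
          OF base_ge_2 perm_less[OF \<omega>]]
      by (simp add: scramble_point_def vec_eq_iff w_def)
  qed
  from ae show ?thesis
    using AE_space AE_scramble_point_in_open_unit_cube[of p] AE_scramble_point_in_open_unit_cube[of q]
    by eventually_elim (auto simp: Let_def h'_def p_restrict q_restrict)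
qed


lemma AE_scrambled_values_differ_across_slabs:
  fixes h :: "real ^ 'd \<Rightarrow> real"
  assumes h_meas: "h \<in> borel_measurable (restrict_space borel open_unit_cube)"
    and h_level: "\<And>v y. v \<in> open_unit_cube \<Longrightarrow>
      measure (uniform_measure lborel {0<..<1}) {x \<in> {0<..<1}. h (coord_upd v j x) = y} = 0"
    and "0 \<le> p $ j" "p $ j < 1" "0 \<le> q $ j" "q $ j < 1"
    and "nat \<lfloor>p $ j * real b ^ r\<rfloor> \<noteq> nat \<lfloor>q $ j * real b ^ r\<rfloor>"
  shows "AE \<omega> in M. h (scramble_point b (\<lambda>\<iota>. \<pi> \<iota> \<omega>) p) \<noteq> h (scramble_point b (\<lambda>\<iota>. \<pi> \<iota> \<omega>) q)"
proof -
  have "0 < b" using base_ge_2 by simp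
  with assms(3-6) obtain s where "1 \<le> s" "s \<le> r" "digit b (p $ j) s \<noteq> digit b (q $ j) s"
    using assms(7) by (rule digit_differs_if_nat_floor_differs)
  with h_meas h_level show ?thesis
    by (intro AE_scrambled_values_differ) auto
qed
end

lemma card_level_set_le:
  assumes "finite I" and cell: "\<And>i k. i \<in> I \<Longrightarrow> k \<in> I \<Longrightarrow> f i = f k \<Longrightarrow> cell i = cell k"
    and card_cell: "\<And>c. card {i \<in> I. cell i = c} \<le> B"
  shows "card {i \<in> I. f i = y} \<le> B"
proof (cases "\<exists>i0\<in>I. f i0 = y")
  case True
  then obtain i0 where "i0 \<in> I" "f i0 = y" by blast
  have "cell i = cell i0" if "i \<in> I" "f i = y" for i
    using cell[OF that(1) \<open>i0 \<in> I\<close>] that(2) \<open>f i0 = y\<close> by simp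
  then have "{i \<in> I. f i = y} \<subseteq> {i \<in> I. cell i = cell i0}"
    by blast
  moreover have "finite {i \<in> I. cell i = cell i0}"
    using \<open>finite I\<close> by simp
  ultimately have "card {i \<in> I. f i = y} \<le> card {i \<in> I. cell i = cell i0}"
    by (rule card_mono[rotated])
  also have "\<dots> \<le> B" by (rule card_cell)
  finally show ?thesis .
next
  case False
  then have "{i \<in> I. f i = y} = {}" by blast
  then show ?thesis by (simp only: card.empty zero_le)
qed
lemma tmd_net_card_slab_le:
  assumes net: "tmd_net b t m u" and "t \<le> m" "0 < b"
  shows "card {i \<in> {..<b ^ m}. nat \<lfloor>u i $ j * real b ^ (m - t)\<rfloor> = c} \<le> b ^ t"
proof (cases "c < b ^ (m - t)")
  case True
  then show ?thesis
    using tmd_net_card_slab[OF assms True] by (simp only: lessThan_iff order_refl)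
next
  case False
  have "nat \<lfloor>u i $ j * real b ^ (m - t)\<rfloor> \<noteq> c" if "i \<in> {..<b ^ m}" for i
    using tmd_net_nat_floor_less[OF net lessThan_iff[THEN iffD1, OF that] \<open>0 < b\<close>, of j "m - t"]
      False by linarith
  then have "{i \<in> {..<b ^ m}. nat \<lfloor>u i $ j * real b ^ (m - t)\<rfloor> = c} = {}"
    by blast
  then show ?thesis by (simp only: card.empty zero_le)
qed

theorem lemma2:
  fixes b t m n :: nat
    and \<Theta> :: "real set"
    and g :: "real \<Rightarrow> real ^ 'd \<Rightarrow> real"
    and \<theta> :: real
    and u :: "nat \<Rightarrow> real ^ 'd"
    and M :: "'\<omega> measure"
    and \<pi> :: "'d \<times> nat list \<Rightarrow> '\<omega> \<Rightarrow> nat \<Rightarrow> nat"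
  assumes b: "b \<ge> 2"
    and tm: "t \<le> m"
    and n: "n = b ^ m"
    and g_meas: "\<forall>th\<in>\<Theta>. g th \<in> borel_measurable (restrict_space borel open_unit_cube)"
    and g_cont: "\<forall>th\<in>\<Theta>. \<forall>j v a c y. v \<in> open_unit_cube \<and> 0 \<le> a \<and> a < c \<and> c \<le> 1 \<longrightarrow>
        measure (uniform_measure lborel {a<..<c})
          {x \<in> {a<..<c}. g th (coord_upd v j x) = y} = 0"
    and \<theta>: "\<theta> \<in> \<Theta>"
    and net: "tmd_net b t m u"
    and M: "prob_space M"
    and indep: "prob_space.indep_vars M
        (\<lambda>_. uniform_count_measure {p. p permutes {0..<b}}) \<pi> UNIV"
    and unif: "\<forall>\<iota>. distr M (uniform_count_measure {p. p permutes {0..<b}}) (\<pi> \<iota>)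
                  = uniform_count_measure {p. p permutes {0..<b}}"
  shows "AE \<omega> in M. \<forall>y. card {i. i < n \<and>
           g \<theta> (scramble_point b (\<lambda>\<iota>. \<pi> \<iota> \<omega>) (u i)) = y} \<le> b ^ t"
proof -
  interpret owen_scrambling M b \<pi>
    by (intro owen_scrambling.intro indep_uniform_permutations.intro[OF M]
        indep_uniform_permutations_axioms.intro) (use b indep unif in blast)+
  fix j :: 'd
  have g_meas_\<theta>: "g \<theta> \<in> borel_measurable (restrict_space borel open_unit_cube)"
    using g_meas \<theta> by blast
  have g_level_\<theta>: "\<And>v y. v \<in> open_unit_cube \<Longrightarrow>
      measure (uniform_measure lborel {0<..<1}) {x \<in> {0<..<1}. g \<theta> (coord_upd v j x) = y} = 0"
    using g_cont \<theta> by fastforce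
  define cell where "cell i = nat \<lfloor>u i $ j * real b ^ (m - t)\<rfloor>" for i
  let ?L = "\<lambda>\<omega> i. g \<theta> (scramble_point b (\<lambda>\<iota>. \<pi> \<iota> \<omega>) (u i))"
  have "AE \<omega> in M. \<forall>i\<in>{..<n}. \<forall>k\<in>{..<n}. ?L \<omega> i = ?L \<omega> k \<longrightarrow> cell i = cell k"
  proof (intro AE_finite_allI finite_lessThan)
    fix i k assume "i \<in> {..<n}" "k \<in> {..<n}"
    then have ik: "i < b ^ m" "k < b ^ m" unfolding n by simp_all
    have "AE \<omega> in M. ?L \<omega> i \<noteq> ?L \<omega> k" if "cell i \<noteq> cell k"
      using that unfolding cell_def
      by (intro AE_scrambled_values_differ_across_slabs[OF g_meas_\<theta> g_level_\<theta>])
        (simp_all add: tmd_net_in_unit_cube[OF net] ik)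
    then show "AE \<omega> in M. ?L \<omega> i = ?L \<omega> k \<longrightarrow> cell i = cell k"
      by (cases "cell i = cell k") (auto intro: AE_I2 elim: eventually_mono)
  qed
  then show ?thesis
  proof (rule eventually_mono)
    fix \<omega> assume same_cell: "\<forall>i\<in>{..<n}. \<forall>k\<in>{..<n}. ?L \<omega> i = ?L \<omega> k \<longrightarrow> cell i = cell k"
    have "card {i \<in> {..<n}. ?L \<omega> i = y} \<le> b ^ t" for y
    proof (rule card_level_set_le)
      show "card {i \<in> {..<n}. cell i = c} \<le> b ^ t" for c
        unfolding n cell_def using b by (intro tmd_net_card_slab_le[OF net tm]) simp
      show "cell i = cell k" if "i \<in> {..<n}" "k \<in> {..<n}" "?L \<omega> i = ?L \<omega> k" for i k
        using same_cell that by blast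
    qed simp
    then show "\<forall>y. card {i. i < n \<and> ?L \<omega> i = y} \<le> b ^ t" by (simp only: lessThan_iff simp_thms)
  qed
qed

end
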